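(* In the virtually-$\mathbb{Z}$ setting described in the context, for every $s\in G$ the quantity $\mathrm{imp}_k(s)=\max\{|p(gs)-p(g)| : g\in V_{\{k\}}\}$ does not depend on $k\in\mathbb{Z}$.
   Context: $G$ is a finitely generated group, $H\leq G$ a subgroup of finite index and $\varphi:H\to\mathbb{Z}$ a group isomorphism. $F\subseteq G$ is a finite set with $1_G\in F$ containing exactly one element of each right coset $Hg$, so every $g\in G$ decomposes uniquely as $g=zf$ with $z\in H$, $f\in F$. Define $p:G\to\mathbb{Z}$ by $p(zf)=\varphi(z)$. For $k\in\mathbb{Z}$, the $k$-th vertebra is $V_{\{k\}}=p^{-1}(\{k\})$ (a finite set). *)

theory Defs
  imports "HOL-Algebra.Algebra"
begin

definition fin_gen_group :: "('a, 'b) monoid_scheme \<Rightarrow> bool" where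
  "fin_gen_group G \<longleftrightarrow> (\<exists>S. finite S \<and> S \<subseteq> carrier G \<and> generate G S = carrier G)"

definition right_transversal :: "('a, 'b) monoid_scheme \<Rightarrow> 'a set \<Rightarrow> 'a set \<Rightarrow> bool" where
  "right_transversal G H F \<longleftrightarrow> F \<subseteq> carrier G \<and>
     (\<forall>C \<in> rcosets\<^bsub>G\<^esub> H. \<exists>!f. f \<in> F \<and> f \<in> C)"

definition vz_p :: "('a, 'b) monoid_scheme \<Rightarrow> 'a set \<Rightarrow> ('a \<Rightarrow> int) \<Rightarrow> 'a set \<Rightarrow> 'a \<Rightarrow> int" where
  "vz_p G H \<phi> F g = \<phi> (THE z. z \<in> H \<and> (\<exists>f\<in>F. g = z \<otimes>\<^bsub>G\<^esub> f))"

definition vertebra :: "('a, 'b) monoid_scheme \<Rightarrow> 'a set \<Rightarrow> ('a \<Rightarrow> int) \<Rightarrow> 'a set \<Rightarrow> int \<Rightarrow> 'a set" where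
  "vertebra G H \<phi> F k = {g \<in> carrier G. vz_p G H \<phi> F g = k}"

definition imp :: "('a, 'b) monoid_scheme \<Rightarrow> 'a set \<Rightarrow> ('a \<Rightarrow> int) \<Rightarrow> 'a set \<Rightarrow> int \<Rightarrow> 'a \<Rightarrow> int" where
  "imp G H \<phi> F k s = Max {\<bar>vz_p G H \<phi> F (g \<otimes>\<^bsub>G\<^esub> s) - vz_p G H \<phi> F g\<bar> | g. g \<in> vertebra G H \<phi> F k}"

end

theory Submission
  imports Defs
begin

text \<open>
  Every element of \<open>G\<close> is uniquely \<open>z f\<close> with \<open>z \<in> H\<close> and \<open>f \<in> F\<close>, and then \<open>p (m z f) = \<phi> m + p (z f)\<close>
  for \<open>m \<in> H\<close>. Hence left multiplication by \<open>m\<close> shifts every value of \<open>p\<close> by \<open>\<phi> m\<close>: it maps the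
  vertebra \<open>V\<^sub>k\<close> onto \<open>V\<^bsub>k + \<phi> m\<^esub>\<close> and leaves every displacement \<open>p (g s) - p g\<close> unchanged.
  As \<open>\<phi>\<close> is onto \<open>\<int>\<close>, all vertebrae realise the same set of displacements, so their maxima agree.
\<close>

locale right_transversal_decomposition = group G for G (structure) +
  fixes H :: "'a set" and F :: "'a set"
  assumes subgroup: "subgroup H G"
    and transversal: "right_transversal G H F"
begin

lemma transversal_subset_carrier: "F \<subseteq> carrier G"
  using transversal unfolding right_transversal_def by blast

lemma subgroup_subset_carrier: "H \<subseteq> carrier G"
  using subgroup by (rule subgroup.subset)

lemma transversal_meets_rcoset:
  assumes "g \<in> carrier G"
  obtains f where "f \<in> F" "f \<in> H #> g"
  using transversal assms rcosetsI[OF subgroup_subset_carrier]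
  unfolding right_transversal_def by blast

lemma decomposition_exists:
  assumes g: "g \<in> carrier G"
  obtains z f where "z \<in> H" "f \<in> F" "g = z \<otimes> f"
proof -
  obtain f where f: "f \<in> F" "f \<in> H #> g"
    using transversal_meets_rcoset[OF g] .
  have "H #> g = H #> f"
    using repr_independence[OF f(2) g subgroup] .
  then have "g \<in> H #> f"
    using rcos_self[OF g subgroup] by simp
  then show ?thesis
    using that f(1) unfolding r_coset_def by blast
qed

lemma decomposition_unique:
  assumes "z1 \<in> H" "f1 \<in> F" "z2 \<in> H" "f2 \<in> F" and eq: "z1 \<otimes> f1 = z2 \<otimes> f2"
  shows "z1 = z2" and "f1 = f2"
proof -
  have carrier: "z1 \<in> carrier G" "f1 \<in> carrier G" "z2 \<in> carrier G" "f2 \<in> carrier G"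
    using assms subgroup_subset_carrier transversal_subset_carrier by auto
  define g where "g = z1 \<otimes> f1"
  have g: "g \<in> carrier G"
    using carrier unfolding g_def by simp
  have "H #> f1 = H #> g" "H #> f2 = H #> g"
    using rcosI[OF _ subgroup_subset_carrier] repr_independence[OF _ _ subgroup] assms carrier
    unfolding g_def by (metis eq)+
  then have "f1 \<in> H #> g" "f2 \<in> H #> g"
    using rcos_self[OF _ subgroup] carrier by blast+
  then show "f1 = f2"
    using transversal assms(2,4) rcosetsI[OF subgroup_subset_carrier g]
    unfolding right_transversal_def by blast
  then show "z1 = z2"
    using eq carrier r_cancel by blast
qed

lemma vz_p_mult:
  assumes "z \<in> H" "f \<in> F"
  shows "vz_p G H \<phi> F (z \<otimes> f) = \<phi> z"
proof -
  have "(THE z'. z' \<in> H \<and> (\<exists>f'\<in>F. z \<otimes> f = z' \<otimes> f')) = z"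
    using assms decomposition_unique(1)[OF assms] by (intro the_equality) auto
  then show ?thesis
    unfolding vz_p_def by simp
qed

lemma vz_p_left_mult:
  assumes hom: "\<phi> \<in> hom (G\<lparr>carrier := H\<rparr>) integer_group"
    and m: "m \<in> H" and g: "g \<in> carrier G"
  shows "vz_p G H \<phi> F (m \<otimes> g) = \<phi> m + vz_p G H \<phi> F g"
proof -
  obtain z f where zf: "z \<in> H" "f \<in> F" "g = z \<otimes> f"
    using decomposition_exists[OF g] .
  have "m \<otimes> g = (m \<otimes> z) \<otimes> f"
    using zf m subgroup_subset_carrier transversal_subset_carrier by (simp add: m_assoc subsetD)
  then have "vz_p G H \<phi> F (m \<otimes> g) = \<phi> (m \<otimes> z)"
    using vz_p_mult subgroup.m_closed[OF subgroup m zf(1)] zf(2) by simp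
  also have "\<dots> = \<phi> m + \<phi> z"
    using hom_mult[OF hom] m zf(1) by simp
  finally show ?thesis
    using vz_p_mult[OF zf(1,2)] zf(3) by simp
qed

definition vertebra_displacements :: "('a \<Rightarrow> int) \<Rightarrow> int \<Rightarrow> 'a \<Rightarrow> int set" where
  "vertebra_displacements \<phi> k s =
     {\<bar>vz_p G H \<phi> F (g \<otimes> s) - vz_p G H \<phi> F g\<bar> | g. g \<in> vertebra G H \<phi> F k}"

lemma vertebra_displacements_left_mult_subset:
  assumes hom: "\<phi> \<in> hom (G\<lparr>carrier := H\<rparr>) integer_group"
    and m: "m \<in> H" and s: "s \<in> carrier G"
  shows "vertebra_displacements \<phi> k s \<subseteq> vertebra_displacements \<phi> (\<phi> m + k) s"
proof
  fix d assume "d \<in> vertebra_displacements \<phi> k s"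
  then obtain g where g: "g \<in> carrier G" "vz_p G H \<phi> F g = k"
    and d: "d = \<bar>vz_p G H \<phi> F (g \<otimes> s) - vz_p G H \<phi> F g\<bar>"
    unfolding vertebra_displacements_def vertebra_def by blast
  have m_carrier: "m \<in> carrier G"
    using m subgroup_subset_carrier by blast
  have shift_g: "vz_p G H \<phi> F (m \<otimes> g) = \<phi> m + k"
    using vz_p_left_mult[OF hom m g(1)] g(2) by simp
  have shift_gs: "vz_p G H \<phi> F (m \<otimes> g \<otimes> s) = \<phi> m + vz_p G H \<phi> F (g \<otimes> s)"
    using vz_p_left_mult[OF hom m, of "g \<otimes> s"] g(1) s m_carrier by (simp add: m_assoc)
  have "m \<otimes> g \<in> vertebra G H \<phi> F (\<phi> m + k)"
    unfolding vertebra_def using shift_g g(1) m_carrier by simp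
  moreover have "d = \<bar>vz_p G H \<phi> F (m \<otimes> g \<otimes> s) - vz_p G H \<phi> F (m \<otimes> g)\<bar>"
    using d shift_g shift_gs g(2) by simp
  ultimately show "d \<in> vertebra_displacements \<phi> (\<phi> m + k) s"
    unfolding vertebra_displacements_def by blast
qed

lemma vertebra_displacements_independent:
  assumes iso: "\<phi> \<in> iso (G\<lparr>carrier := H\<rparr>) integer_group" and s: "s \<in> carrier G"
  shows "vertebra_displacements \<phi> k s = vertebra_displacements \<phi> l s"
proof -
  have hom: "\<phi> \<in> hom (G\<lparr>carrier := H\<rparr>) integer_group"
    using iso by (simp add: iso_def)
  have onto: "\<phi> ` H = UNIV"
    using iso by (simp add: iso_def bij_betw_def)
  have "vertebra_displacements \<phi> k s \<subseteq> vertebra_displacements \<phi> l s" for k l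
  proof -
    obtain m where "m \<in> H" "\<phi> m = l - k"
      using onto by (metis UNIV_I imageE)
    then show ?thesis
      using vertebra_displacements_left_mult_subset[OF hom _ s] by fastforce
  qed
  then show ?thesis
    by (simp add: subset_antisym)
qed

end

theorem proposition3:
  fixes G :: "('a, 'b) monoid_scheme" and H :: "'a set" and \<phi> :: "'a \<Rightarrow> int" and F :: "'a set"
  assumes "group G"
    and "fin_gen_group G"
    and "subgroup H G"
    and "finite (rcosets\<^bsub>G\<^esub> H)"
    and "\<phi> \<in> iso (G\<lparr>carrier := H\<rparr>) integer_group"
    and "finite F"
    and "\<one>\<^bsub>G\<^esub> \<in> F"
    and "right_transversal G H F"
    and "s \<in> carrier G"
  shows "imp G H \<phi> F k s = imp G H \<phi> F l s"
proof -
  interpret right_transversal_decomposition G H F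
    using assms(1,3,8) by (simp add: right_transversal_decomposition_def
        right_transversal_decomposition_axioms_def)
  show ?thesis
    unfolding imp_def
    using vertebra_displacements_independent[OF assms(5,9), of k l]
    unfolding vertebra_displacements_def by (rule arg_cong)
qed

end
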